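(* For every integer $k\ge 3$, $\mathcal{C}_2(2k,k,2)\le 2^{2k}+6(2^k-1)$.
   Context: A $q$-covering design $\mathcal{C}_q(n,k,r)$ is a collection of $k$-dimensional subspaces of $\mathbb{F}_q^n$ such that every $r$-dimensional subspace of $\mathbb{F}_q^n$ is contained in at least one member; $\mathcal{C}_q(n,k,r)$ denotes the minimum size of such a collection. *)

theory Defs
  imports "HOL-Analysis.Analysis" "HOL-Library.Z2"
begin

text \<open>The ambient space F_q^n is modelled as the vector type 'a ^ 'n over a field 'a,
  with n = CARD('n).\<close>

definition is_q_covering_design :: "('a::field ^ 'n) set set \<Rightarrow> nat \<Rightarrow> nat \<Rightarrow> bool" where
  "is_q_covering_design C k r \<longleftrightarrow>
     (\<forall>U\<in>C. vec.subspace U \<and> vec.dim U = k) \<and>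
     (\<forall>W::('a ^ 'n) set. vec.subspace W \<and> vec.dim W = r \<longrightarrow> (\<exists>U\<in>C. W \<subseteq> U))"

definition q_covering_number :: "('a::field ^ 'n) itself \<Rightarrow> nat \<Rightarrow> nat \<Rightarrow> nat" where
  "q_covering_number _ k r =
     Inf {card C | C :: ('a ^ 'n) set set. finite C \<and> is_q_covering_design C k r}"

end

theory Submission
  imports Defs "HOL-Algebra.Algebraic_Closure_Type"
begin

(* Write F = GF(2^k) and identify F_2^{2k} with F \<times> F as F_2-spaces; a k-dimensional
   F_2-subspace is then an additively closed set of 2^k points. For \<alpha>, \<beta> \<in> F the graph of
   the F_2-linear map x \<mapsto> \<alpha> x + \<beta> x^2 is one; two points (a1, c1), (a2, c2) with a1, a2
   nonzero and distinct lie on one of these 2^{2k} graphs, as the linear system for (\<alpha>, \<beta>)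
   has determinant a1 a2 (a1 + a2) \<noteq> 0. The remaining pairs are caught by the sets
   {0} \<times> ker \<nu> \<union> {a} \<times> (e + ker \<nu>) with a \<noteq> 0, \<nu> one of the three nonzero functionals of a
   pencil chosen for a, and e one of the two cosets of ker \<nu>: 6 (2^k - 1) sets. A pencil
   always contains a functional vanishing at a given point, which handles the pairs with one
   first coordinate 0, and by additivity also the pairs with equal nonzero first coordinates.
   For pairs in {0} \<times> F some nonzero combination of three independent functionals vanishes at
   both points, so it suffices that the pencils together contain all seven such combinations. *)

lemma proots_prod_linear_factors: "proots (\<Prod>x\<in>#A. [:-x, 1:]) = (A :: 'a::idom multiset)"
proof (induction A)
  case (add x A)
  have "(\<Prod>y\<in>#A. [:-y, 1:]) \<noteq> (0 :: 'a poly)"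
    by (auto simp: prod_mset_zero_iff)
  moreover have "proots [:-x, 1:] = {#x#}"
    using proots_linear_factor[of "-x"] by simp
  ultimately show ?case
    using add.IH by (simp add: proots_mult del: mult_pCons_left)
qed simp

lemma size_proots_alg_closed:
  fixes p :: "'a::alg_closed_field poly"
  assumes "p \<noteq> 0"
  shows "size (proots p) = Polynomial.degree p"
proof -
  obtain A where A: "size A = Polynomial.degree p" "p = Polynomial.smult (Polynomial.lead_coeff p) (\<Prod>x\<in>#A. [:-x, 1:])"
    using alg_closed_imp_factorization[OF assms] by blast
  have "proots p = proots (\<Prod>x\<in>#A. [:-x, 1:])"
    using assms by (subst A(2)) simp
  also have "\<dots> = A"
    by (rule proots_prod_linear_factors)
  finally show ?thesis using A(1) by simp
qed

lemma order_le_1_if_poly_pderiv_nonzero: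
  fixes p :: "'a::idom poly"
  assumes "poly (pderiv p) x \<noteq> 0"
  shows "Polynomial.order x p \<le> 1"
proof (rule ccontr)
  define h where "h = [:-x, 1:]"
  assume "\<not> Polynomial.order x p \<le> 1"
  then have "h ^ 2 dvd p"
    by (simp add: h_def order_divides)
  then obtain q where "p = h * (h * q)"
    by (metis dvdE power2_eq_square mult.assoc)
  then have "pderiv p = h * pderiv (h * q) + (h * q) * pderiv h"
    by (simp add: pderiv_mult)
  then have "poly (pderiv p) x = 0"
    by (simp add: h_def)
  with assms show False by contradiction
qed

lemma card_roots_separable:
  fixes p :: "'a::alg_closed_field poly"
  assumes "p \<noteq> 0" and separable: "\<And>x. poly p x = 0 \<Longrightarrow> poly (pderiv p) x \<noteq> 0"
  shows "card {x. poly p x = 0} = Polynomial.degree p"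
proof -
  have "count (proots p) x \<le> 1" for x
    using assms order_le_1_if_poly_pderiv_nonzero order_root by (metis count_proots le_zero_eq zero_le)
  then have "proots p = mset_set (set_mset (proots p))"
    by (intro multiset_eqI) (auto simp: count_mset_set' not_in_iff intro: antisym)
  then have "size (proots p) = card {x. poly p x = 0}"
    using assms(1) by (metis set_count_proots size_mset_set)
  with size_proots_alg_closed[OF assms(1)] show ?thesis by simp
qed

type_synonym K = "bit alg_closure"

lemma two_eq_zero_K [simp]: "(2::K) = 0"
proof -
  have "(2::K) = to_ac (2::bit)" by (simp only: to_ac_numeral)
  then show ?thesis by simp
qed

lemma add_self_K [simp]: "(x::K) + x = 0"
  by (metis mult_2 mult_zero_left two_eq_zero_K)

lemma add_self_left_K [simp]: "(x::K) + (x + y) = y"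
  by (simp add: add.assoc[symmetric])

lemma add_eq_0_iff_K [simp]: "(x::K) + y = 0 \<longleftrightarrow> x = y"
  by (metis add_self_K add_left_cancel)

lemma power2_add_K: "((x::K) + y)\<^sup>2 = x\<^sup>2 + y\<^sup>2"
  by (simp add: power2_sum)

lemma frobenius_K: "((x::K) + y) ^ (2 ^ n) = x ^ (2 ^ n) + y ^ (2 ^ n)"
proof (induction n)
  case (Suc n)
  have "(x + y) ^ (2 ^ Suc n) = ((x + y) ^ (2 ^ n))\<^sup>2"
    by (simp add: power_mult[symmetric] mult.commute)
  also have "\<dots> = x ^ (2 ^ Suc n) + y ^ (2 ^ Suc n)"
    by (simp add: Suc power2_add_K power_mult[symmetric] mult.commute)
  finally show ?case .
qed simp

definition GF :: "nat \<Rightarrow> K set" where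
  "GF k = {x. x ^ (2 ^ k) = x}"

lemma card_GF:
  assumes "k \<ge> 1"
  shows "card (GF k) = 2 ^ k"
proof -
  define p :: "K poly" where "p = Polynomial.monom 1 (2 ^ k) + [:0, 1:]"
  have two_le: "2 \<le> (2::nat) ^ k"
    using assms by (simp add: self_le_power)
  have deg: "Polynomial.degree p = 2 ^ k"
    unfolding p_def using two_le by (subst degree_add_eq_left) (simp_all add: degree_monom_eq)
  have "pderiv p = 1"
    using assms by (simp add: p_def pderiv_add pderiv_monom pderiv_pCons power_0_left one_pCons[symmetric])
  moreover have "{x. poly p x = 0} = GF k"
    by (simp add: p_def GF_def poly_monom)
  moreover have "p \<noteq> 0"
    using deg two_le by auto
  ultimately show ?thesis
    using card_roots_separable[of p] deg by simp
qed

lemma finite_GF: "k \<ge> 1 \<Longrightarrow> finite (GF k)"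
  using card_GF by (metis card.infinite power_not_zero zero_neq_numeral)

lemma GF_0 [simp]: "0 \<in> GF k"
  and GF_1 [simp]: "1 \<in> GF k"
  by (simp_all add: GF_def)

lemma GF_add: "x \<in> GF k \<Longrightarrow> y \<in> GF k \<Longrightarrow> x + y \<in> GF k"
  by (simp add: GF_def frobenius_K)

lemma GF_mult: "x \<in> GF k \<Longrightarrow> y \<in> GF k \<Longrightarrow> x * y \<in> GF k"
  by (simp add: GF_def power_mult_distrib)

lemma GF_divide: "x \<in> GF k \<Longrightarrow> y \<in> GF k \<Longrightarrow> x / y \<in> GF k"
  by (simp add: GF_def power_divide)

lemma GF_power: "x \<in> GF k \<Longrightarrow> x ^ n \<in> GF k"
  by (induction n) (auto intro: GF_mult)

lemma UNIV_bit: "(UNIV :: bit set) = {0, 1}"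
  using bit.exhaust by auto

lemma ex_bit_iff: "(\<exists>b::bit. P b) \<longleftrightarrow> P 0 \<or> P 1"
  by (metis bit.exhaust)

lemma card_UNIV_bit: "card (UNIV :: bit set) = 2"
  by (simp add: UNIV_bit)

lemma finite_UNIV_bit: "finite (UNIV :: bit set)"
  by (simp add: UNIV_bit)

definition bit_scale :: "bit \<Rightarrow> 'a::ab_group_add \<Rightarrow> 'a" where
  "bit_scale c x = (if c = 0 then 0 else x)"

lemma vector_space_bit_scale:
  assumes "\<And>x::'a::ab_group_add. x + x = 0"
  shows "vector_space (bit_scale :: bit \<Rightarrow> 'a \<Rightarrow> 'a)"
proof
  fix a b :: bit and x y :: 'a
  show "bit_scale a (x + y) = bit_scale a x + bit_scale a y"
    by (simp add: bit_scale_def)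
  show "bit_scale (a + b) x = bit_scale a x + bit_scale b x"
    using assms by (cases a; cases b) (simp_all add: bit_scale_def)
  show "bit_scale a (bit_scale b x) = bit_scale (a * b) x"
    by (cases a; cases b) (simp_all add: bit_scale_def)
  show "bit_scale 1 x = x"
    by (simp add: bit_scale_def)
qed

definition add_closed :: "'a::monoid_add set \<Rightarrow> bool" where
  "add_closed U \<longleftrightarrow> 0 \<in> U \<and> (\<forall>x\<in>U. \<forall>y\<in>U. x + y \<in> U)"

lemma add_closed_Times: "add_closed A \<Longrightarrow> add_closed B \<Longrightarrow> add_closed (A \<times> B)"
  by (auto simp: add_closed_def zero_prod_def)

lemma subspace_bit_scale_iff:
  assumes "\<And>x::'a::ab_group_add. x + x = 0"
  shows "module.subspace (bit_scale :: bit \<Rightarrow> 'a \<Rightarrow> 'a) U \<longleftrightarrow> add_closed U"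
proof -
  interpret vector_space "bit_scale :: bit \<Rightarrow> 'a \<Rightarrow> 'a"
    using vector_space_bit_scale assms .
  show ?thesis
    by (auto simp: subspace_def add_closed_def bit_scale_def)
qed

lemma vec_subspace_bit_iff: "vec.subspace (U :: (bit ^ 'n) set) \<longleftrightarrow> add_closed U"
proof -
  have "c *s x \<in> U" if "add_closed U" "x \<in> U" for c :: bit and x
    using that by (cases c) (simp_all add: add_closed_def)
  then show ?thesis
    by (auto simp: vec.subspace_def add_closed_def)
qed

lemma (in vector_space) card_span_independent:
  assumes "finite B" "independent B" "finite (UNIV :: 'a set)"
  shows "card (span B) = card (UNIV :: 'a set) ^ card B"
  using assms(1,2)
proof (induction B rule: finite_induct)
  case (insert b B)
  have indep: "independent B" and b: "b \<notin> span B"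
    using insert.prems insert.hyps(2) by (auto simp: independent_insert)
  let ?g = "\<lambda>(c, y). scale c b + y"
  have span_eq: "span (insert b B) = ?g ` (UNIV \<times> span B)"
  proof (intro equalityI subsetI)
    fix x assume "x \<in> span (insert b B)"
    then obtain c where "x - scale c b \<in> span B"
      by (auto simp: span_insert)
    then show "x \<in> ?g ` (UNIV \<times> span B)"
      by (intro image_eqI[of _ _ "(c, x - scale c b)"]) auto
  next
    fix x assume "x \<in> ?g ` (UNIV \<times> span B)"
    then obtain c y where "y \<in> span B" "x = scale c b + y"
      by auto
    then show "x \<in> span (insert b B)"
      unfolding span_insert by (intro CollectI exI[of _ c]) simp
  qed
  have "inj_on ?g (UNIV \<times> span B)"
  proof (rule inj_onI, clarify)
    fix c y c' y'
    assume y: "y \<in> span B" "y' \<in> span B" and eq: "scale c b + y = scale c' b + y'"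
    have "scale (c - c') b = y' - y"
      using eq by (simp add: scale_left_diff_distrib algebra_simps)
    then have "scale (c - c') b \<in> span B"
      using y by (simp add: span_diff)
    then have "c = c'"
      using b span_scale[of "scale (c - c') b" B "inverse (c - c')"] by (cases "c = c'") auto
    with eq show "c = c' \<and> y = y'"
      by simp
  qed
  then have "card (span (insert b B)) = card (UNIV :: 'a set) * card (span B)"
    by (simp add: span_eq card_image card_cartesian_product)
  with insert.IH[OF indep] insert.hyps show ?case
    by simp
qed simp

lemma (in vector_space) card_subspace:
  assumes "subspace S" "finite S" "finite (UNIV :: 'a set)"
  shows "card S = card (UNIV :: 'a set) ^ dim S"
proof -
  obtain B where B: "B \<subseteq> S" "independent B" "S \<subseteq> span B" "card B = dim S"
    using basis_exists by blast
  then have "span B = S" and "finite B"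
    using span_subspace assms(1,2) finite_subset by auto
  with card_span_independent[OF _ B(2) assms(3)] B(4) show ?thesis
    by simp
qed

lemma card_vec_subspace_bit:
  assumes "vec.subspace (U :: (bit ^ 'n) set)" "finite U"
  shows "card U = 2 ^ vec.dim U"
  using vec.card_subspace[OF assms finite_UNIV_bit] card_UNIV_bit by simp

lemma ex_additive_dual_functional:
  fixes B :: "'v::ab_group_add set"
  assumes char2: "\<And>x::'v. x + x = 0"
    and indep: "module.independent (bit_scale :: bit \<Rightarrow> 'v \<Rightarrow> 'v) B"
  shows "\<exists>l :: 'v \<Rightarrow> bit. Modules.additive l \<and> (\<forall>x\<in>B. l x = (if x = b then 1 else 0))"
proof -
  interpret V: vector_space "bit_scale :: bit \<Rightarrow> 'v \<Rightarrow> 'v"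
    using vector_space_bit_scale char2 .
  interpret VB: vector_space_pair "bit_scale :: bit \<Rightarrow> 'v \<Rightarrow> 'v" "bit_scale :: bit \<Rightarrow> bit \<Rightarrow> bit"
    by (simp add: vector_space_pair_def V.vector_space_axioms vector_space_bit_scale)
  obtain l :: "'v \<Rightarrow> bit" where l: "Vector_Spaces.linear bit_scale bit_scale l" "\<forall>x\<in>B. l x = (if x = b then 1 else 0)"
    using VB.linear_independent_extend[OF indep, of "\<lambda>x. if x = b then 1 else 0"] by blast
  have "Modules.additive l"
    by unfold_locales (rule VB.linear_add[OF l(1)])
  with l(2) show ?thesis
    by blast
qed

lemma ex_additive_bij_betw_vec:
  fixes S :: "'v::ab_group_add set"
  assumes char2: "\<And>x::'v. x + x = 0"
    and S: "add_closed S" "finite S" "card S = 2 ^ CARD('n::finite)"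
  shows "\<exists>f :: bit ^ 'n \<Rightarrow> 'v. Modules.additive f \<and> bij_betw f UNIV S"
proof -
  interpret V: vector_space "bit_scale :: bit \<Rightarrow> 'v \<Rightarrow> 'v"
    using vector_space_bit_scale char2 .
  interpret P: vector_space_pair "(*s) :: bit \<Rightarrow> bit ^ 'n \<Rightarrow> bit ^ 'n" "bit_scale :: bit \<Rightarrow> 'v \<Rightarrow> 'v"
    by (simp add: vector_space_pair_def vec.vector_space_axioms V.vector_space_axioms)
  have sub: "V.subspace S"
    using S(1) subspace_bit_scale_iff char2 by blast
  have dim_eq: "vec.dim (UNIV :: (bit ^ 'n) set) = V.dim S"
    using V.card_subspace[OF sub S(2) finite_UNIV_bit] S(3) card_UNIV_bit vec_dim_card[where 'a=bit and 'n='n] by simp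
  obtain B :: "(bit ^ 'n) set" where B: "B \<subseteq> UNIV" "vec.independent B" "UNIV \<subseteq> vec.span B" "card B = vec.dim (UNIV :: (bit ^ 'n) set)"
    using vec.basis_exists by blast
  obtain C :: "'v set" where C: "C \<subseteq> S" "V.independent C" "S \<subseteq> V.span C" "card C = V.dim S"
    using V.basis_exists by blast
  have "finite B"
    using B(4) vec_dim_card[where 'a=bit and 'n='n] card.infinite by fastforce
  moreover have "finite C"
    using C(1) S(2) finite_subset by blast
  ultimately obtain f :: "bit ^ 'n \<Rightarrow> 'v" where f: "Vector_Spaces.linear (*s) bit_scale f" "f ` UNIV = S" "inj_on f UNIV"
    using P.finite_basis_to_basis_subspace_isomorphism[OF vec.subspace_UNIV sub dim_eq _ B _ C] by blast
  have "Modules.additive f"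
    by unfold_locales (rule P.linear_add[OF f(1)])
  with f(2,3) show ?thesis
    by (auto simp: bij_betw_def)
qed

definition is_pair_covering :: "'a::monoid_add set set \<Rightarrow> 'a set \<Rightarrow> nat \<Rightarrow> bool" where
  "is_pair_covering C S m \<longleftrightarrow>
     (\<forall>U\<in>C. add_closed U \<and> U \<subseteq> S \<and> card U = m) \<and>
     (\<forall>u\<in>S. \<forall>v\<in>S. u \<noteq> v \<longrightarrow> (\<exists>U\<in>C. u \<in> U \<and> v \<in> U))"

lemma q_covering_design_vimage:
  fixes f :: "bit ^ 'n \<Rightarrow> 'v::ab_group_add"
  assumes f: "Modules.additive f" "bij_betw f UNIV S"
    and C: "is_pair_covering C S (2 ^ k)"
  shows "is_q_covering_design ((\<lambda>U. f -` U) ` C) k 2"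
proof -
  interpret additive f by fact
  have add_closed_vimage: "add_closed (f -` U)" if "add_closed U" for U
    using that by (simp add: add_closed_def zero add)
  have block: "vec.subspace (f -` U) \<and> vec.dim (f -` U) = k" if "U \<in> C" for U
  proof -
    have U: "add_closed U" "U \<subseteq> S" "card U = 2 ^ k"
      using C that by (auto simp: is_pair_covering_def)
    then have sub: "vec.subspace (f -` U)"
      by (simp add: vec_subspace_bit_iff add_closed_vimage)
    have "bij_betw f (f -` U) U"
      using f(2) U(2) by (auto simp: bij_betw_def inj_on_def)
    then have card: "card (f -` U) = 2 ^ k"
      using U(3) bij_betw_same_card by metis
    then have "finite (f -` U)"
      by (intro card_ge_0_finite) simp
    with card card_vec_subspace_bit[OF sub] show ?thesis
      using sub by simp
  qed
  have cover: "\<exists>U'\<in>(\<lambda>U. f -` U) ` C. W \<subseteq> U'" if W: "vec.subspace W" "vec.dim W = 2" for W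
  proof -
    obtain B where B: "B \<subseteq> W" "W \<subseteq> vec.span B" "card B = 2"
      using vec.basis_exists W(2) by metis
    then obtain w1 w2 where w: "B = {w1, w2}" "w1 \<noteq> w2"
      by (meson card_2_iff)
    have "f w1 \<in> S" "f w2 \<in> S" "f w1 \<noteq> f w2"
      using f(2) w(2) by (auto simp: bij_betw_def inj_on_def)
    then obtain U where U: "U \<in> C" "f w1 \<in> U" "f w2 \<in> U"
      using C unfolding is_pair_covering_def by blast
    then have "vec.span B \<subseteq> f -` U"
      using block w vec.span_minimal by (metis empty_subsetI insert_subset vimage_eq)
    with B(2) U(1) show ?thesis
      by blast
  qed
  show ?thesis
    unfolding is_q_covering_design_def using block cover by blast
qed

lemma add_closed_GF: "add_closed (GF k)"
  by (simp add: add_closed_def GF_add)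

lemma add_self_K_times_K: "(x::K \<times> K) + x = 0"
  by (cases x) (simp add: zero_prod_def)

definition graph_block :: "nat \<Rightarrow> K \<Rightarrow> K \<Rightarrow> (K \<times> K) set" where
  "graph_block k \<alpha> \<beta> = (\<lambda>x. (x, \<alpha> * x + \<beta> * x\<^sup>2)) ` GF k"

lemma graph_block_add_closed: "add_closed (graph_block k \<alpha> \<beta>)"
proof -
  have "(x, \<alpha> * x + \<beta> * x\<^sup>2) + (y, \<alpha> * y + \<beta> * y\<^sup>2) = (x + y, \<alpha> * (x + y) + \<beta> * (x + y)\<^sup>2)" for x y :: K
    by (simp add: power2_add_K algebra_simps)
  then show ?thesis
    by (force simp: add_closed_def graph_block_def zero_prod_def intro: GF_add)
qed

lemma graph_block_subset: "\<alpha> \<in> GF k \<Longrightarrow> \<beta> \<in> GF k \<Longrightarrow> graph_block k \<alpha> \<beta> \<subseteq> GF k \<times> GF k"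
  by (auto simp: graph_block_def intro!: GF_add GF_mult GF_power)

lemma card_graph_block: "k \<ge> 1 \<Longrightarrow> card (graph_block k \<alpha> \<beta>) = 2 ^ k"
  unfolding graph_block_def by (subst card_image) (auto simp: inj_on_def card_GF)

lemma graph_block_through_two_points:
  assumes GF: "a1 \<in> GF k" "a2 \<in> GF k" "c1 \<in> GF k" "c2 \<in> GF k"
    and nonzero: "a1 \<noteq> 0" "a2 \<noteq> 0" "a1 \<noteq> a2"
  shows "\<exists>\<alpha>\<in>GF k. \<exists>\<beta>\<in>GF k. (a1, c1) \<in> graph_block k \<alpha> \<beta> \<and> (a2, c2) \<in> graph_block k \<alpha> \<beta>"
proof -
  define D where "D = a1 * a2\<^sup>2 + a2 * a1\<^sup>2"
  define \<alpha> where "\<alpha> = (c1 * a2\<^sup>2 + c2 * a1\<^sup>2) / D"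
  define \<beta> where "\<beta> = (c1 * a2 + c2 * a1) / D"
  have "D = a1 * a2 * (a1 + a2)"
    by (simp add: D_def power2_eq_square algebra_simps)
  with nonzero have "D \<noteq> 0"
    by simp
  have "D \<in> GF k"
    unfolding D_def using GF by (intro GF_add GF_mult GF_power)
  then have "\<alpha> \<in> GF k"
    unfolding \<alpha>_def using GF by (intro GF_divide GF_add GF_mult GF_power)
  have "\<beta> \<in> GF k"
    unfolding \<beta>_def using GF \<open>D \<in> GF k\<close> by (intro GF_divide GF_add GF_mult)
  \<comment> \<open>Cramer's rule; the terms c a^3 that do not cancel occur twice, hence vanish.\<close>
  have "\<alpha> * a1 + \<beta> * a1\<^sup>2 = (c1 * D + (c2 * a1 ^ 3 + c2 * a1 ^ 3)) / D"
    by (simp add: \<alpha>_def \<beta>_def D_def add_divide_distrib[symmetric] power2_eq_square power3_eq_cube algebra_simps)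
  also have "\<dots> = c1"
    using \<open>D \<noteq> 0\<close> by simp
  finally have "(a1, c1) \<in> graph_block k \<alpha> \<beta>"
    unfolding graph_block_def using GF by force
  have "\<alpha> * a2 + \<beta> * a2\<^sup>2 = (c2 * D + (c1 * a2 ^ 3 + c1 * a2 ^ 3)) / D"
    by (simp add: \<alpha>_def \<beta>_def D_def add_divide_distrib[symmetric] power2_eq_square power3_eq_cube algebra_simps)
  also have "\<dots> = c2"
    using \<open>D \<noteq> 0\<close> by simp
  finally have "(a2, c2) \<in> graph_block k \<alpha> \<beta>"
    unfolding graph_block_def using GF by force
  with \<open>(a1, c1) \<in> graph_block k \<alpha> \<beta>\<close> \<open>\<alpha> \<in> GF k\<close> \<open>\<beta> \<in> GF k\<close> show ?thesis
    by blast
qed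

definition kernel_block :: "nat \<Rightarrow> K \<Rightarrow> (K \<Rightarrow> bit) \<Rightarrow> K \<Rightarrow> (K \<times> K) set" where
  "kernel_block k a \<nu> e = (\<lambda>z. (0, z)) ` {z \<in> GF k. \<nu> z = 0} \<union> (\<lambda>z. (a, e + z)) ` {z \<in> GF k. \<nu> z = 0}"

lemma card_kernel_GF:
  fixes \<nu> :: "K \<Rightarrow> bit"
  assumes "k \<ge> 1" "Modules.additive \<nu>" "r \<in> GF k" "\<nu> r = 1"
  shows "2 * card {z \<in> GF k. \<nu> z = 0} = 2 ^ k"
proof -
  interpret additive \<nu> by fact
  let ?Z = "{z \<in> GF k. \<nu> z = 0}"
  have split: "GF k = ?Z \<union> (\<lambda>z. z + r) ` ?Z"
  proof (intro equalityI subsetI)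
    fix x assume x: "x \<in> GF k"
    show "x \<in> ?Z \<union> (\<lambda>z. z + r) ` ?Z"
    proof (cases "\<nu> x = 0")
      case False
      then have "\<nu> x = 1"
        using bit_not_zero_iff by blast
      then have "\<nu> (x + r) = 0"
        using assms(4) by (simp add: add)
      then have "x + r \<in> ?Z" and "x = (x + r) + r"
        using x assms(3) by (simp_all add: GF_add add.assoc)
      then show ?thesis by blast
    qed (use x in simp)
  next
    fix x assume "x \<in> ?Z \<union> (\<lambda>z. z + r) ` ?Z"
    then show "x \<in> GF k"
      using assms(3) by (auto intro: GF_add)
  qed
  have "?Z \<inter> (\<lambda>z. z + r) ` ?Z = {}"
    using assms(4) by (auto simp: add)
  then have "card (GF k) = card ?Z + card ((\<lambda>z. z + r) ` ?Z)"
    using finite_GF[OF assms(1)] by (subst split, intro card_Un_disjoint) auto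
  also have "card ((\<lambda>z. z + r) ` ?Z) = card ?Z"
    by (rule card_image) (simp add: inj_on_def)
  finally show ?thesis
    using card_GF[OF assms(1)] by simp
qed

lemma mem_kernel_block_iff:
  "u \<in> kernel_block k a \<nu> e \<longleftrightarrow> (\<exists>z\<in>GF k. \<nu> z = 0 \<and> (u = (0, z) \<or> u = (a, e + z)))"
  by (auto simp: kernel_block_def)

lemma in_kernel_block_0: "z \<in> GF k \<Longrightarrow> \<nu> z = 0 \<Longrightarrow> (0, z) \<in> kernel_block k a \<nu> e"
  unfolding kernel_block_def by blast

lemma kernel_block_add_closed:
  assumes "Modules.additive \<nu>"
  shows "add_closed (kernel_block k a \<nu> e)"
proof -
  interpret additive \<nu> by fact
  have "u + v \<in> kernel_block k a \<nu> e"
    if u: "u \<in> kernel_block k a \<nu> e" and v: "v \<in> kernel_block k a \<nu> e" for u v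
  proof -
    obtain z where z: "z \<in> GF k" "\<nu> z = 0" "u = (0, z) \<or> u = (a, e + z)"
      using u unfolding mem_kernel_block_iff by blast
    obtain w where w: "w \<in> GF k" "\<nu> w = 0" "v = (0, w) \<or> v = (a, e + w)"
      using v unfolding mem_kernel_block_iff by blast
    have "u + v = (0, z + w) \<or> u + v = (a, e + (z + w))"
      using z(3) w(3) by (elim disjE) (simp_all add: add_ac)
    moreover have "z + w \<in> GF k" "\<nu> (z + w) = 0"
      using z w by (simp_all add: GF_add add)
    ultimately show ?thesis
      unfolding kernel_block_def by blast
  qed
  moreover have "(0, 0) \<in> kernel_block k a \<nu> e"
    using zero by (simp add: in_kernel_block_0)
  ultimately show ?thesis
    by (simp add: add_closed_def zero_prod_def)
qed

lemma kernel_block_subset: "a \<in> GF k \<Longrightarrow> e \<in> GF k \<Longrightarrow> kernel_block k a \<nu> e \<subseteq> GF k \<times> GF k"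
  by (auto simp: kernel_block_def intro: GF_add)

lemma card_kernel_block:
  assumes "k \<ge> 1" "Modules.additive \<nu>" "r \<in> GF k" "\<nu> r = 1" "a \<noteq> 0"
  shows "card (kernel_block k a \<nu> e) = 2 ^ k"
proof -
  let ?Z = "{z \<in> GF k. \<nu> z = 0}"
  have "finite ?Z"
    using finite_GF[OF assms(1)] by simp
  with assms(5) have "card (kernel_block k a \<nu> e) = card ((\<lambda>z. (0::K, z)) ` ?Z) + card ((\<lambda>z. (a, e + z)) ` ?Z)"
    unfolding kernel_block_def by (intro card_Un_disjoint) auto
  also have "\<dots> = 2 * card ?Z"
    by (simp add: card_image inj_on_def)
  finally show ?thesis
    using card_kernel_GF[OF assms(1-4)] by simp
qed

lemma in_kernel_block:
  assumes "Modules.additive \<nu>" "c \<in> GF k" "e \<in> GF k" "\<nu> c = \<nu> e"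
  shows "(a, c) \<in> kernel_block k a \<nu> e"
proof -
  interpret additive \<nu> by fact
  have "e + c \<in> {z \<in> GF k. \<nu> z = 0}"
    using assms(2-4) by (simp add: GF_add add)
  moreover have "c = e + (e + c)"
    by (simp add: add.assoc[symmetric])
  ultimately show ?thesis
    unfolding kernel_block_def by blast
qed

lemma bit3_common_zero:
  fixes x1 x2 x3 y1 y2 y3 :: bit
  shows "\<exists>e1 e2 e3. (e1, e2, e3) \<noteq> 0 \<and> e1 * x1 + e2 * x2 + e3 * x3 = 0 \<and> e1 * y1 + e2 * y2 + e3 * y3 = 0"
  by (cases x1; cases x2; cases x3; cases y1; cases y2; cases y3)
    (simp_all add: zero_prod_def ex_bit_iff)

locale dual_triple =
  fixes k :: nat and l1 l2 l3 :: "K \<Rightarrow> bit" and b1 b2 b3 :: K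
  assumes k_ge_1: "k \<ge> 1"
    and additive: "Modules.additive l1" "Modules.additive l2" "Modules.additive l3"
    and in_GF: "b1 \<in> GF k" "b2 \<in> GF k" "b3 \<in> GF k"
    and dual: "l1 b1 = 1" "l1 b2 = 0" "l1 b3 = 0" "l2 b1 = 0" "l2 b2 = 1" "l2 b3 = 0"
      "l3 b1 = 0" "l3 b2 = 0" "l3 b3 = 1"
begin

definition lcomb :: "bit \<times> bit \<times> bit \<Rightarrow> K \<Rightarrow> bit" where
  "lcomb e x = (case e of (e1, e2, e3) \<Rightarrow> e1 * l1 x + e2 * l2 x + e3 * l3 x)"

lemma lcomb_simp [simp]: "lcomb (e1, e2, e3) x = e1 * l1 x + e2 * l2 x + e3 * l3 x"
  by (simp add: lcomb_def)

lemma additive_lcomb: "Modules.additive (lcomb e)"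
proof -
  interpret l1: additive l1 by (fact additive)
  interpret l2: additive l2 by (fact additive)
  interpret l3: additive l3 by (fact additive)
  show ?thesis
    by unfold_locales (cases e; simp add: l1.add l2.add l3.add algebra_simps del: add_bit_eq_xor mult_bit_eq_and)
qed

lemma lcomb_add: "lcomb (e + e') x = lcomb e x + lcomb e' x"
  by (cases e; cases e') (simp add: algebra_simps del: add_bit_eq_xor mult_bit_eq_and)

lemma lcomb_witness:
  assumes "e \<noteq> 0"
  obtains r where "r \<in> GF k" "lcomb e r = 1"
proof -
  obtain e1 e2 e3 where e: "e = (e1, e2, e3)"
    by (cases e) auto
  consider "e1 = 1" | "e1 = 0" "e2 = 1" | "e1 = 0" "e2 = 0" "e3 = 1"
    using assms e by (cases e1; cases e2; cases e3) (simp_all add: zero_prod_def)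
  then show ?thesis
    using that in_GF dual e by cases auto
qed

lemma lcomb_common_zero: "\<exists>e. e \<noteq> 0 \<and> lcomb e c = 0 \<and> lcomb e d = 0"
  using bit3_common_zero[of "l1 c" "l2 c" "l3 c" "l1 d" "l2 d" "l3 d"] by auto

lemma b_distinct: "b1 \<noteq> b2" "b1 \<noteq> b3" "b2 \<noteq> b3"
  using dual by auto

lemma b_nonzero: "b1 \<noteq> 0" "b2 \<noteq> 0" "b3 \<noteq> 0"
  using dual additive.zero[OF additive(1)] additive.zero[OF additive(2)] additive.zero[OF additive(3)]
  by auto

(* The pencils at b1, b2, b3 are three lines through (1, 0, 0) in the Fano plane of
   nonzero combinations, hence together contain all seven of them. *)
definition pencil_dir :: "K \<Rightarrow> bit \<times> bit \<times> bit" where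
  "pencil_dir a = (if a = b2 then (0, 0, 1) else if a = b3 then (0, 1, 1) else (0, 1, 0))"

definition pencil :: "K \<Rightarrow> (bit \<times> bit \<times> bit) set" where
  "pencil a = {(1, 0, 0), pencil_dir a, (1, 0, 0) + pencil_dir a}"

lemma pencil_nonzero: "e \<in> pencil a \<Longrightarrow> e \<noteq> 0"
  by (auto simp: pencil_def pencil_dir_def zero_prod_def split: if_splits)

lemma pencil_vanishing: "\<exists>e\<in>pencil a. lcomb e d = 0"
proof -
  let ?p = "(1, 0, 0) :: bit \<times> bit \<times> bit" and ?q = "pencil_dir a"
  have "?p \<in> pencil a" "?q \<in> pencil a" "?p + ?q \<in> pencil a"
    by (simp_all add: pencil_def)
  moreover have "lcomb ?p d = 0 \<or> lcomb ?q d = 0 \<or> lcomb (?p + ?q) d = 0"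
    unfolding lcomb_add by (cases "lcomb ?p d"; cases "lcomb ?q d") simp_all
  ultimately show ?thesis
    by blast
qed

lemma pencils_cover:
  assumes "e \<noteq> 0"
  shows "\<exists>a\<in>{b1, b2, b3}. e \<in> pencil a"
proof -
  obtain e1 e2 e3 where "e = (e1, e2, e3)"
    by (cases e) auto
  with assms b_distinct show ?thesis
    by (cases e1; cases e2; cases e3) (auto simp: pencil_def pencil_dir_def zero_prod_def)
qed

definition coset_rep :: "bit \<times> bit \<times> bit \<Rightarrow> K" where
  "coset_rep e = (SOME r. r \<in> GF k \<and> lcomb e r = 1)"

lemma coset_rep: "e \<noteq> 0 \<Longrightarrow> coset_rep e \<in> GF k \<and> lcomb e (coset_rep e) = 1"
  unfolding coset_rep_def by (rule someI_ex) (metis lcomb_witness)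

definition graph_blocks :: "(K \<times> K) set set" where
  "graph_blocks = (\<lambda>(\<alpha>, \<beta>). graph_block k \<alpha> \<beta>) ` (GF k \<times> GF k)"

definition kernel_blocks :: "(K \<times> K) set set" where
  "kernel_blocks = (\<lambda>(a, e, t). kernel_block k a (lcomb e) (if t then coset_rep e else 0)) `
     (SIGMA a : GF k - {0}. pencil a \<times> UNIV)"

lemma kernel_blocks_cover_vertical:
  assumes "a \<in> GF k" "a \<noteq> 0" "c \<in> GF k" "d \<in> GF k"
  shows "\<exists>U\<in>kernel_blocks. (a, c) \<in> U \<and> (0, d) \<in> U"
proof -
  obtain e where e: "e \<in> pencil a" "lcomb e d = 0"
    using pencil_vanishing by blast
  define t where "t = (lcomb e c = 1)"
  let ?U = "kernel_block k a (lcomb e) (if t then coset_rep e else 0)"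
  have "lcomb e c = lcomb e (if t then coset_rep e else 0)"
    using coset_rep[OF pencil_nonzero[OF e(1)]] additive.zero[OF additive_lcomb]
    by (cases "lcomb e c") (auto simp: t_def)
  then have "(a, c) \<in> ?U"
    using assms(3) coset_rep[OF pencil_nonzero[OF e(1)]]
    by (intro in_kernel_block additive_lcomb) auto
  moreover have "(0, d) \<in> ?U"
    using assms(4) e(2) by (rule in_kernel_block_0)
  moreover have "?U \<in> kernel_blocks"
    unfolding kernel_blocks_def using assms(1,2) e(1) by (intro image_eqI[of _ _ "(a, e, t)"]) auto
  ultimately show ?thesis
    by blast
qed

lemma kernel_blocks_cover_axis:
  assumes "c \<in> GF k" "d \<in> GF k"
  shows "\<exists>U\<in>kernel_blocks. (0, c) \<in> U \<and> (0, d) \<in> U"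
proof -
  obtain e where e: "e \<noteq> 0" "lcomb e c = 0" "lcomb e d = 0"
    using lcomb_common_zero by blast
  then obtain a where a: "a \<in> {b1, b2, b3}" "e \<in> pencil a"
    using pencils_cover by blast
  let ?U = "kernel_block k a (lcomb e) 0"
  have "(0, c) \<in> ?U" "(0, d) \<in> ?U"
    using assms e by (simp_all add: in_kernel_block_0)
  moreover have "?U \<in> kernel_blocks"
    unfolding kernel_blocks_def using a in_GF b_nonzero by (intro image_eqI[of _ _ "(a, e, False)"]) auto
  ultimately show ?thesis
    by blast
qed

lemma graph_blocks_block:
  assumes "U \<in> graph_blocks"
  shows "add_closed U \<and> U \<subseteq> GF k \<times> GF k \<and> card U = 2 ^ k"
proof -
  obtain \<alpha> \<beta> where "\<alpha> \<in> GF k" "\<beta> \<in> GF k" "U = graph_block k \<alpha> \<beta>"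
    using assms by (auto simp: graph_blocks_def)
  then show ?thesis
    using k_ge_1 graph_block_add_closed graph_block_subset card_graph_block by blast
qed

lemma kernel_blocks_block:
  assumes "U \<in> kernel_blocks"
  shows "add_closed U \<and> U \<subseteq> GF k \<times> GF k \<and> card U = 2 ^ k"
proof -
  obtain a e t where "(a, e, t) \<in> (SIGMA a : GF k - {0}. pencil a \<times> UNIV)"
    and U: "U = kernel_block k a (lcomb e) (if t then coset_rep e else 0)"
    using assms unfolding kernel_blocks_def by blast
  then have a: "a \<in> GF k" "a \<noteq> 0" and e: "e \<in> pencil a"
    by auto
  have "coset_rep e \<in> GF k" "lcomb e (coset_rep e) = 1"
    using coset_rep[OF pencil_nonzero[OF e]] by auto
  then show ?thesis
    unfolding U using a k_ge_1 additive_lcomb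
    by (intro conjI kernel_block_add_closed kernel_block_subset card_kernel_block) auto
qed

lemma graph_blocks_cover:
  assumes "a1 \<in> GF k" "a2 \<in> GF k" "c1 \<in> GF k" "c2 \<in> GF k" "a1 \<noteq> 0" "a2 \<noteq> 0" "a1 \<noteq> a2"
  shows "\<exists>U\<in>graph_blocks. (a1, c1) \<in> U \<and> (a2, c2) \<in> U"
proof -
  obtain \<alpha> \<beta> where "\<alpha> \<in> GF k" "\<beta> \<in> GF k" "(a1, c1) \<in> graph_block k \<alpha> \<beta>" "(a2, c2) \<in> graph_block k \<alpha> \<beta>"
    using graph_block_through_two_points[OF assms] by blast
  moreover from this have "graph_block k \<alpha> \<beta> \<in> graph_blocks"
    unfolding graph_blocks_def by (intro image_eqI[of _ _ "(\<alpha>, \<beta>)"]) auto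
  ultimately show ?thesis
    by blast
qed

lemma blocks_cover:
  assumes "u \<in> GF k \<times> GF k" "v \<in> GF k \<times> GF k" "u \<noteq> v"
  shows "\<exists>U\<in>graph_blocks \<union> kernel_blocks. u \<in> U \<and> v \<in> U"
proof -
  obtain a1 c1 a2 c2 where uv: "u = (a1, c1)" "v = (a2, c2)"
    by (cases u, cases v)
  have GF: "a1 \<in> GF k" "c1 \<in> GF k" "a2 \<in> GF k" "c2 \<in> GF k"
    using assms(1,2) uv by auto
  consider "a1 \<noteq> 0" "a2 \<noteq> 0" "a1 \<noteq> a2" | "a1 = 0" "a2 = 0" | "a1 = 0" "a2 \<noteq> 0"
    | "a1 \<noteq> 0" "a2 = 0" | "a1 \<noteq> 0" "a1 = a2"
    by blast
  then show ?thesis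
  proof cases
    case 1
    then show ?thesis
      using graph_blocks_cover[OF GF(1,3,2,4)] uv by blast
  next
    case 2
    then show ?thesis
      using kernel_blocks_cover_axis[OF GF(2,4)] uv by blast
  next
    case 3
    then show ?thesis
      using kernel_blocks_cover_vertical[OF GF(3) _ GF(4,2)] uv by blast
  next
    case 4
    then show ?thesis
      using kernel_blocks_cover_vertical[OF GF(1) _ GF(2,4)] uv by blast
  next
    case 5
    \<comment> \<open>(a, c2) = (a, c1) + (0, c1 + c2), and blocks are closed under addition.\<close>
    then obtain U where U: "U \<in> kernel_blocks" "(a1, c1) \<in> U" "(0, c1 + c2) \<in> U"
      using kernel_blocks_cover_vertical[OF GF(1) _ GF(2) GF_add[OF GF(2,4)]] by blast
    then have "(a1, c1) + (0, c1 + c2) \<in> U"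
      using kernel_blocks_block[OF U(1)] unfolding add_closed_def by blast
    moreover have "(a1, c1) + (0, c1 + c2) = v"
      using 5 uv by simp
    ultimately show ?thesis
      using U uv by blast
  qed
qed

lemma blocks_pair_covering: "is_pair_covering (graph_blocks \<union> kernel_blocks) (GF k \<times> GF k) (2 ^ k)"
proof -
  have "\<forall>U\<in>graph_blocks \<union> kernel_blocks. add_closed U \<and> U \<subseteq> GF k \<times> GF k \<and> card U = 2 ^ k"
    using graph_blocks_block kernel_blocks_block by blast
  then show ?thesis
    by (simp add: is_pair_covering_def blocks_cover)
qed

lemma card_blocks: "card (graph_blocks \<union> kernel_blocks) \<le> 2 ^ (2 * k) + 6 * (2 ^ k - 1)"
proof -
  have fin: "finite (GF k)"
    using finite_GF[OF k_ge_1] .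
  have "card graph_blocks \<le> card (GF k \<times> GF k)"
    unfolding graph_blocks_def using fin by (intro card_image_le) simp
  also have "\<dots> = 2 ^ (2 * k)"
    using card_GF[OF k_ge_1] by (simp add: card_cartesian_product power_add[symmetric] mult_2)
  finally have graph: "card graph_blocks \<le> 2 ^ (2 * k)" .
  have "card kernel_blocks \<le> card (SIGMA a : GF k - {0}. pencil a \<times> (UNIV :: bool set))"
    unfolding kernel_blocks_def using fin by (intro card_image_le) (simp add: pencil_def)
  also have "\<dots> = (\<Sum>a\<in>GF k - {0}. card (pencil a) * 2)"
    using fin by (simp add: card_cartesian_product pencil_def)
  also have "\<dots> \<le> (\<Sum>a\<in>GF k - {0}. 6)"
    by (intro sum_mono) (simp add: pencil_def card_insert_le_m1)
  also have "\<dots> = 6 * (2 ^ k - 1)"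
    using fin card_GF[OF k_ge_1] by simp
  finally have kernel: "card kernel_blocks \<le> 6 * (2 ^ k - 1)" .
  show ?thesis
    using card_Un_le[of graph_blocks kernel_blocks] graph kernel by linarith
qed

lemma finite_blocks: "finite (graph_blocks \<union> kernel_blocks)"
  unfolding graph_blocks_def kernel_blocks_def using finite_GF[OF k_ge_1] by (simp add: pencil_def)

end

lemma ex_dual_triple:
  assumes "k \<ge> 3"
  shows "\<exists>l1 l2 l3 b1 b2 b3. dual_triple k l1 l2 l3 b1 b2 b3"
proof -
  have k: "k \<ge> 1"
    using assms by simp
  interpret V: vector_space "bit_scale :: bit \<Rightarrow> K \<Rightarrow> K"
    by (rule vector_space_bit_scale) simp
  have sub: "V.subspace (GF k)"
    by (rule subspace_bit_scale_iff[OF add_self_K, THEN iffD2, OF add_closed_GF])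
  obtain B where B: "B \<subseteq> GF k" "V.independent B" "GF k \<subseteq> V.span B" "card B = V.dim (GF k)"
    by (rule V.basis_exists)
  have "2 ^ V.dim (GF k) = (2::nat) ^ k"
    using V.card_subspace[OF sub finite_GF[OF k] finite_UNIV_bit] card_GF[OF k] card_UNIV_bit by simp
  with B(4) assms have "card B \<ge> 3"
    by simp
  then obtain T where "T \<subseteq> B" "card T = 3"
    by (meson obtain_subset_with_card_n)
  then obtain b1 b2 b3 where b: "b1 \<in> B" "b2 \<in> B" "b3 \<in> B" "b1 \<noteq> b2" "b1 \<noteq> b3" "b2 \<noteq> b3"
    by (auto simp: card_3_iff)
  note dual_functional = ex_additive_dual_functional[OF add_self_K B(2)]
  obtain l1 :: "K \<Rightarrow> bit" where l1: "Modules.additive l1" "\<forall>x\<in>B. l1 x = (if x = b1 then 1 else 0)"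
    using dual_functional by blast
  obtain l2 :: "K \<Rightarrow> bit" where l2: "Modules.additive l2" "\<forall>x\<in>B. l2 x = (if x = b2 then 1 else 0)"
    using dual_functional by blast
  obtain l3 :: "K \<Rightarrow> bit" where l3: "Modules.additive l3" "\<forall>x\<in>B. l3 x = (if x = b3 then 1 else 0)"
    using dual_functional by blast
  have "dual_triple k l1 l2 l3 b1 b2 b3"
    using k l1 l2 l3 b B(1) by (auto simp: dual_triple_def)
  then show ?thesis
    by blast
qed

theorem mainTheorem7:
  fixes k :: nat
  assumes "k \<ge> 3" and "CARD('n::finite) = 2 * k"
  shows "q_covering_number TYPE(bit ^ 'n) k 2 \<le> 2 ^ (2 * k) + 6 * (2 ^ k - 1)"
proof -
  obtain l1 l2 l3 b1 b2 b3 where "dual_triple k l1 l2 l3 b1 b2 b3"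
    using ex_dual_triple[OF assms(1)] by blast
  then interpret dual_triple k l1 l2 l3 b1 b2 b3 .
  let ?C = "graph_blocks \<union> kernel_blocks"
  have "card (GF k \<times> GF k) = 2 ^ CARD('n)"
    using card_GF[OF k_ge_1] assms(2) by (simp add: card_cartesian_product power_add[symmetric] mult_2)
  then obtain f :: "bit ^ 'n \<Rightarrow> K \<times> K" where f: "Modules.additive f" "bij_betw f UNIV (GF k \<times> GF k)"
    using ex_additive_bij_betw_vec[OF add_self_K_times_K add_closed_Times[OF add_closed_GF add_closed_GF]]
      finite_GF[OF k_ge_1] by blast
  have "is_q_covering_design ((\<lambda>U. f -` U) ` ?C) k 2"
    using q_covering_design_vimage[OF f blocks_pair_covering] .
  then have "q_covering_number TYPE(bit ^ 'n) k 2 \<le> card ((\<lambda>U. f -` U) ` ?C)"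
    unfolding q_covering_number_def using finite_blocks by (intro cInf_lower) auto
  also have "\<dots> \<le> card ?C"
    using finite_blocks by (rule card_image_le)
  also have "\<dots> \<le> 2 ^ (2 * k) + 6 * (2 ^ k - 1)"
    by (rule card_blocks)
  finally show ?thesis .
qed

end
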